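(* Let $\mathcal{A}$ be a normed algebra that possesses an approximate identity, and let $x\in\mathcal{A}$. Then the right principal ideal $x\mathcal{A}=\{xa: a\in\mathcal{A}\}$ is dense in $\mathcal{A}$ if and only if $x$ is approximately right invertible in $\mathcal{A}$.
   Context: An approximate identity in a normed algebra $\mathcal{A}$ is a net $(e_j)_{j\in J}$ in $\mathcal{A}$ such that $\lim_{j} e_j y=\lim_j y e_j=y$ for every $y\in\mathcal{A}$ (convergence in norm). An element $x\in\mathcal{A}$ is approximately right invertible if there is a net $(r_j)_{j\in J}$ in $\mathcal{A}$ such that $(xr_j)_{j\in J}$ is an approximate identity in $\mathcal{A}$; it is approximately left invertible if there is a net $(l_j)_{j\in J}$ in $\mathcal{A}$ such that $(l_jx)_{j\in J}$ is an approximate identity in $\mathcal{A}$. *)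

theory Defs
  imports "HOL-Analysis.Analysis"
begin

text \<open>Nets are rendered as filters: a net \<open>(e_j)\<close> over a directed set \<open>J\<close> is a function
  \<open>e :: 'j \<Rightarrow> 'a\<close> together with the (proper) section filter \<open>F\<close> of \<open>J\<close>.
  We take the index type to be the algebra itself: this loses nothing, since any net
  may be replaced by its image filter (filtermap) on the algebra.\<close>

definition approx_identity_net :: "('j \<Rightarrow> 'a::real_normed_algebra) \<Rightarrow> 'j filter \<Rightarrow> bool" where
  "approx_identity_net e F \<longleftrightarrow> F \<noteq> bot \<and>
     (\<forall>y. ((\<lambda>j. e j * y) \<longlongrightarrow> y) F \<and> ((\<lambda>j. y * e j) \<longlongrightarrow> y) F)"

definition has_approx_identity :: "'a::real_normed_algebra itself \<Rightarrow> bool" where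
  "has_approx_identity _ \<longleftrightarrow> (\<exists>(e :: 'a \<Rightarrow> 'a) F. approx_identity_net e F)"

definition approx_right_invertible :: "'a::real_normed_algebra \<Rightarrow> bool" where
  "approx_right_invertible x \<longleftrightarrow>
     (\<exists>(r :: 'a \<Rightarrow> 'a) F. approx_identity_net (\<lambda>j. x * r j) F)"

end

theory Submission
  imports Defs
begin

text \<open>If \<open>x r\<^sub>j\<close> is an approximate identity, then every \<open>y\<close> is the limit of \<open>x (r\<^sub>j y)\<close>, so \<open>x\<A>\<close>
  is dense. Conversely, if \<open>x\<A>\<close> is dense and \<open>e\<^sub>j\<close> is an approximate identity, pick \<open>x s\<^sub>j\<^sub>n\<close>
  within \<open>1/(n+1)\<close> of \<open>e\<^sub>j\<close>: indexed by pairs \<open>(j, n)\<close>, these differ from the approximate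
  identity \<open>e\<^sub>j\<close> by a null net, and hence form an approximate identity themselves.\<close>

lemma approx_identity_net_filtermap:
  "approx_identity_net e (filtermap g F) \<longleftrightarrow> approx_identity_net (\<lambda>i. e (g i)) F"
  unfolding approx_identity_net_def by (simp add: filterlim_filtermap filtermap_bot_iff)

lemma approx_identity_net_compose:
  assumes "approx_identity_net e F" and "filterlim g F G" and "G \<noteq> bot"
  shows "approx_identity_net (\<lambda>i. e (g i)) G"
  using assms filterlim_compose[OF _ assms(2)]
  unfolding approx_identity_net_def by blast

lemma approx_identity_net_perturb:
  assumes e: "approx_identity_net e F" and null: "((\<lambda>j. f j - e j) \<longlongrightarrow> 0) F"
  shows "approx_identity_net f F"
  unfolding approx_identity_net_def
proof (intro conjI allI)
  show "F \<noteq> bot" using e by (simp add: approx_identity_net_def)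
next
  fix y
  have "((\<lambda>j. (f j - e j) * y + e j * y) \<longlongrightarrow> 0 * y + y) F"
    using e by (intro tendsto_intros null) (simp add: approx_identity_net_def)
  then show "((\<lambda>j. f j * y) \<longlongrightarrow> y) F"
    by (simp add: algebra_simps)
  have "((\<lambda>j. y * (f j - e j) + y * e j) \<longlongrightarrow> y * 0 + y) F"
    using e by (intro tendsto_intros null) (simp add: approx_identity_net_def)
  then show "((\<lambda>j. y * f j) \<longlongrightarrow> y) F"
    by (simp add: algebra_simps)
qed

text \<open>The index type in \<^const>\<open>approx_right_invertible\<close> is the algebra itself; any other
  index type is pushed forward along \<open>j \<mapsto> x r\<^sub>j\<close>, choosing a preimage of each \<open>x r\<^sub>j\<close>.\<close>

lemma approx_right_invertibleI:
  fixes x :: "'a::real_normed_algebra" and r :: "'j \<Rightarrow> 'a"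
  assumes "approx_identity_net (\<lambda>j. x * r j) F"
  shows "approx_right_invertible x"
proof -
  define r' where "r' z = (SOME a. z = x * a)" for z
  have "x * r' (x * r j) = x * r j" for j
    unfolding r'_def by (rule someI_ex[where P = "\<lambda>a. x * r j = x * a", symmetric]) blast
  with assms have "approx_identity_net (\<lambda>z. x * r' z) (filtermap (\<lambda>j. x * r j) F)"
    by (simp add: approx_identity_net_filtermap)
  then show ?thesis
    unfolding approx_right_invertible_def by blast
qed

lemma dense_right_ideal_if_approx_identity_net:
  fixes x :: "'a::real_normed_algebra"
  assumes "approx_identity_net (\<lambda>j. x * r j) F"
  shows "closure {x * a | a. True} = UNIV"
proof -
  have "y \<in> closure {x * a | a. True}" for y
  proof (rule Lim_in_closed_set)
    show "((\<lambda>j. x * r j * y) \<longlongrightarrow> y) F" and "F \<noteq> bot"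
      using assms by (simp_all add: approx_identity_net_def)
    show "\<forall>\<^sub>F j in F. x * r j * y \<in> closure {x * a | a. True}"
      by (intro always_eventually allI closure_subset[THEN subsetD]) (auto simp: mult.assoc)
  qed simp
  then show ?thesis by blast
qed

lemma approx_right_invertible_if_dense_right_ideal:
  fixes x :: "'a::real_normed_algebra" and e :: "'j \<Rightarrow> 'a"
  assumes e: "approx_identity_net e F" and dense: "closure {x * a | a. True} = UNIV"
  shows "approx_right_invertible x"
proof -
  have "\<exists>a. dist (x * a) (e j) < 1 / real (Suc n)" for j n
  proof -
    have "e j \<in> closure {x * a | a. True}"
      using dense by simp
    then obtain y where "y \<in> {x * a | a. True}" "dist y (e j) < 1 / real (Suc n)"
      unfolding closure_approachable by (meson divide_pos_pos of_nat_0_less_iff zero_less_Suc zero_less_one)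
    then show ?thesis by blast
  qed
  then obtain s where s: "\<And>j n. dist (x * s j n) (e j) < 1 / real (Suc n)"
    by metis
  define P where "P = F \<times>\<^sub>F sequentially"
  have "P \<noteq> bot"
    using e by (simp add: P_def prod_filter_eq_bot approx_identity_net_def)
  with e have e_fst: "approx_identity_net (\<lambda>p. e (fst p)) P"
    unfolding P_def by (rule approx_identity_net_compose[OF _ filterlim_fst])
  have "((\<lambda>p. 1 / real (Suc (snd p))) \<longlongrightarrow> 0) P"
    unfolding P_def
    by (rule filterlim_compose[OF LIMSEQ_Suc[OF lim_1_over_n] filterlim_snd])
  then have "((\<lambda>p. x * s (fst p) (snd p) - e (fst p)) \<longlongrightarrow> 0) P"
  proof (rule Lim_null_comparison[rotated], intro always_eventually allI)
    show "norm (x * s (fst p) (snd p) - e (fst p)) \<le> 1 / real (Suc (snd p))" for p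
      using s[of "fst p" "snd p"] by (simp add: dist_norm)
  qed
  with e_fst have "approx_identity_net (\<lambda>p. x * s (fst p) (snd p)) P"
    by (rule approx_identity_net_perturb)
  then show ?thesis
    by (rule approx_right_invertibleI)
qed

theorem theorem2p7:
  fixes x :: "'a::real_normed_algebra"
  assumes "has_approx_identity TYPE('a)"
  shows "closure {x * a | a. True} = UNIV \<longleftrightarrow> approx_right_invertible x"
proof
  obtain e :: "'a \<Rightarrow> 'a" and F where "approx_identity_net e F"
    using assms unfolding has_approx_identity_def by blast
  then show "closure {x * a | a. True} = UNIV \<Longrightarrow> approx_right_invertible x"
    by (rule approx_right_invertible_if_dense_right_ideal)
next
  show "approx_right_invertible x \<Longrightarrow> closure {x * a | a. True} = UNIV"
    unfolding approx_right_invertible_def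
    using dense_right_ideal_if_approx_identity_net by blast
qed

end
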